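(* Let $0<q<1$, let $X\ge 0$ have a distribution $P_X$ with $q$-density $f$ and finite $q$-moments of all orders, and let $m\in\mathbb{N}$. If there is a constant $C>0$ such that $$f(q^{-mj})\ge C\,q^{mj(j+1)/2}\quad\text{for all } j\ge 0,$$ then $P_X$ is $q$-moment indeterminate.
   Context: Fix $0<q<1$. All random variables are non-negative. The Jackson $q$-integral is $\int_0^a g(t)\,d_qt=a(1-q)\sum_{j=0}^\infty g(aq^j)q^j$ for $a>0$, and the improper $q$-integral is $\int_0^\infty g(t)\,d_qt=(1-q)\sum_{j=-\infty}^{\infty}g(q^j)q^j$. A function $f$ on $(0,\infty)$ is a $q$-density of $X$ (with distribution function $F_X$) if $F_X(x)=\int_0^x f(t)\,d_qt$ for all $x>0$. The $n$-th $q$-moment is $m_q(n;f)=m_q(n;X)=\int_0^\infty t^nf(t)\,d_qt=(1-q)\sum_{j\in\mathbb{Z}}q^{j(n+1)}f(q^j)$, $n\in\mathbb{N}_0$. For functions $f,g$ on $(0,\infty)$ write $f\sim g$ iff $f(q^j)=g(q^j)$ for all $j\in\mathbb{Z}$. A distribution $P_X$ with $q$-density $f$ and finite $q$-moments of all orders is $q$-moment determinate if, whenever $Y$ is a random variable with $q$-density $g$ and $m_q(k;Y)=m_q(k;X)$ for all $k\in\mathbb{N}_0$, one has $f\sim g$; otherwise it is $q$-moment indeterminate. *)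

theory Defs
  imports "HOL-Probability.Probability"
begin

text \<open>A nonnegative random variable is represented by its distribution: a probability
  measure on the Borel sets of the reals, concentrated on [0,\<infinity>).
  Its distribution function is \<open>x \<mapsto> measure M {..x}\<close>.\<close>

definition nonneg_distr :: "real measure \<Rightarrow> bool" where
  "nonneg_distr M \<longleftrightarrow> prob_space M \<and> sets M = sets borel \<and> (AE x in M. 0 \<le> x)"

definition jackson_int :: "real \<Rightarrow> real \<Rightarrow> (real \<Rightarrow> real) \<Rightarrow> real" where
  "jackson_int q a g = a * (1 - q) * (\<Sum>j. g (a * q ^ j) * q ^ j)"

definition q_density :: "real \<Rightarrow> real measure \<Rightarrow> (real \<Rightarrow> real) \<Rightarrow> bool" where
  "q_density q M f \<longleftrightarrow>
     (\<forall>x>0. summable (\<lambda>j. f (x * q ^ j) * q ^ j) \<and> measure M {..x} = jackson_int q x f)"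

definition q_moment_term :: "real \<Rightarrow> (real \<Rightarrow> real) \<Rightarrow> nat \<Rightarrow> int \<Rightarrow> real" where
  "q_moment_term q f n j = q powi (j * (int n + 1)) * f (q powi j)"

definition q_moment :: "real \<Rightarrow> (real \<Rightarrow> real) \<Rightarrow> nat \<Rightarrow> real" where
  "q_moment q f n = (1 - q) * infsum (q_moment_term q f n) UNIV"

definition finite_q_moments :: "real \<Rightarrow> (real \<Rightarrow> real) \<Rightarrow> bool" where
  "finite_q_moments q f \<longleftrightarrow> (\<forall>n. q_moment_term q f n summable_on UNIV)"

definition q_equiv :: "real \<Rightarrow> (real \<Rightarrow> real) \<Rightarrow> (real \<Rightarrow> real) \<Rightarrow> bool" where
  "q_equiv q f g \<longleftrightarrow> (\<forall>j::int. f (q powi j) = g (q powi j))"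

text \<open>q-moment determinacy of the distribution \<open>M\<close> with q-density \<open>f\<close>
  (finite q-moments being a standing hypothesis where used).\<close>
definition q_moment_determinate :: "real \<Rightarrow> real measure \<Rightarrow> (real \<Rightarrow> real) \<Rightarrow> bool" where
  "q_moment_determinate q M f \<longleftrightarrow>
     (\<forall>N g. nonneg_distr N \<and> q_density q N g \<and> finite_q_moments q g \<and>
            (\<forall>k. q_moment q g k = q_moment q f k) \<longrightarrow> q_equiv q f g)"

definition q_moment_indeterminate :: "real \<Rightarrow> real measure \<Rightarrow> (real \<Rightarrow> real) \<Rightarrow> bool" where
  "q_moment_indeterminate q M f \<longleftrightarrow> \<not> q_moment_determinate q M f"

end

theory Submission
  imports Defs
begin

text \<open>The Euler series \<open>\<phi>(z) = \<Sum>\<^sub>i h\<^sub>i z^i\<close>, with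
  \<open>h\<^sub>i = (-1)^i Q^(i(i-1)/2) / ((1-Q)(1-Q^2)\<cdots>(1-Q^i))\<close>, is entire and satisfies
  \<open>\<phi>(z) = (1-z) \<phi>(Qz)\<close>, so it vanishes at every \<open>Q^(-k)\<close>, \<open>k \<ge> 0\<close>.
  For \<open>Q = q^m\<close> the signed weights \<open>h\<^sub>i\<close> placed at the lattice points \<open>q^(-mi)\<close> therefore
  have all q-moments zero. Since \<open>|h\<^sub>i|\<close> decays like \<open>q^(mi(i-1)/2)\<close>, the growth hypothesis
  on \<open>f\<close> says that the masses \<open>(1-q) q^j f(q^j)\<close> which \<open>P\<^sub>X\<close> gives to the intervals
  \<open>(q^(j+1), q^j]\<close> dominate a small multiple of these weights. Adding that multiple to the
  masses yields a different probability distribution on the lattice \<open>{q^j}\<close> with the same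
  q-moments.\<close>

section \<open>Euler's series\<close>

fun euler_coeff :: "real \<Rightarrow> nat \<Rightarrow> real" where
  "euler_coeff Q 0 = 1"
| "euler_coeff Q (Suc i) = - euler_coeff Q i * Q ^ i / (1 - Q ^ Suc i)"

lemma abs_euler_coeff:
  assumes "0 < Q" "Q < 1"
  shows "\<bar>euler_coeff Q i\<bar> = Q powr (real i * (real i - 1) / 2) * (\<Prod>n\<in>{1..i}. 1 / (1 - Q ^ n))"
proof (induction i)
  case 0
  then show ?case using assms by simp
next
  case (Suc i)
  have "Q ^ Suc i < 1" using assms by (rule power_Suc_less_one)
  then have "\<bar>euler_coeff Q (Suc i)\<bar> = \<bar>euler_coeff Q i\<bar> * Q powr real i * (1 / (1 - Q ^ Suc i))"
    using assms by (simp add: abs_mult abs_divide powr_realpow)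
  also have "\<dots> = Q powr (real i * (real i - 1) / 2 + real i) *
      ((\<Prod>n\<in>{1..i}. 1 / (1 - Q ^ n)) * (1 / (1 - Q ^ Suc i)))"
    unfolding Suc powr_add by (simp add: mult_ac)
  also have "real i * (real i - 1) / 2 + real i = real (Suc i) * (real (Suc i) - 1) / 2"
    by (simp add: field_simps)
  also have "(\<Prod>n\<in>{1..i}. 1 / (1 - Q ^ n)) * (1 / (1 - Q ^ Suc i)) = (\<Prod>n\<in>{1..Suc i}. 1 / (1 - Q ^ n))"
    by (simp add: prod.nat_ivl_Suc')
  finally show ?case .
qed

lemma prod_inverse_one_minus_power_le:
  fixes Q :: real
  assumes "0 < Q" "Q < 1"
  shows "(\<Prod>n\<in>{1..i}. 1 / (1 - Q ^ n)) \<le> exp (1 / (1 - Q)^2)"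
proof -
  have "(\<Prod>n\<in>{1..i}. 1 / (1 - Q ^ n)) \<le> (\<Prod>n\<in>{1..i}. exp (Q ^ n / (1 - Q)))"
  proof (rule prod_mono)
    fix n :: nat assume "n \<in> {1..i}"
    then have Qn: "Q ^ n < 1" "Q ^ n \<le> Q"
      using assms power_decreasing[of 1 n Q] power_less_one_iff[of Q n] by auto
    have "1 / (1 - Q ^ n) = 1 + Q ^ n / (1 - Q ^ n)" using Qn by (simp add: field_simps)
    also have "\<dots> \<le> exp (Q ^ n / (1 - Q ^ n))" by (rule exp_ge_add_one_self[simplified add.commute])
    also have "\<dots> \<le> exp (Q ^ n / (1 - Q))"
      using Qn assms by (intro exp_mono divide_left_mono) auto
    finally show "0 \<le> 1 / (1 - Q ^ n) \<and> 1 / (1 - Q ^ n) \<le> exp (Q ^ n / (1 - Q))"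
      using Qn by simp
  qed
  also have "\<dots> = exp ((\<Sum>n\<in>{1..i}. Q ^ n) / (1 - Q))"
    by (simp add: exp_sum sum_divide_distrib)
  also have "\<dots> \<le> exp (1 / (1 - Q)^2)"
  proof -
    have "(\<Sum>n\<in>{1..i}. Q ^ n) \<le> (\<Sum>n<Suc i. Q ^ n)"
      using assms by (intro sum_mono2) auto
    also have "\<dots> = (1 - Q ^ Suc i) / (1 - Q)"
      using assms by (simp only: sum_gp_strict) simp
    also have "\<dots> \<le> 1 / (1 - Q)"
      using assms by (intro divide_right_mono) auto
    finally have "(\<Sum>n\<in>{1..i}. Q ^ n) / (1 - Q) \<le> 1 / (1 - Q) / (1 - Q)"
      using assms by (intro divide_right_mono) auto
    then show ?thesis by (simp add: power2_eq_square)
  qed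
  finally show ?thesis .
qed

lemma abs_euler_coeff_le:
  assumes "0 < Q" "Q < 1"
  shows "\<bar>euler_coeff Q i\<bar> \<le> exp (1 / (1 - Q)^2) * Q powr (real i * (real i - 1) / 2)"
  unfolding abs_euler_coeff[OF assms] mult.commute[of "exp _"]
  by (intro mult_left_mono prod_inverse_one_minus_power_le assms) simp

lemma summable_norm_euler_series:
  assumes "0 < Q" "Q < 1"
  shows "summable (\<lambda>i. norm (euler_coeff Q i * z ^ i))"
proof -
  have "(\<lambda>n. norm z * Q ^ n / (1 - Q)) \<longlonglongrightarrow> norm z * 0 / (1 - Q)"
    using assms by (intro tendsto_intros LIMSEQ_power_zero) auto
  then have "eventually (\<lambda>n. norm z * Q ^ n / (1 - Q) < 1/2) sequentially"
    by (intro order_tendstoD(2)) auto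
  then obtain N where N: "\<And>n. n \<ge> N \<Longrightarrow> norm z * Q ^ n / (1 - Q) < 1/2"
    by (auto simp: eventually_sequentially)
  show ?thesis
  proof (rule summable_ratio_test[of "1/2" N])
    fix n assume "n \<ge> N"
    have "Q ^ Suc n \<le> Q" "Q ^ Suc n < 1"
      using assms power_decreasing[of 1 "Suc n" Q] power_Suc_less_one[of Q n] by auto
    then have "\<bar>euler_coeff Q (Suc n)\<bar> \<le> \<bar>euler_coeff Q n\<bar> * (Q ^ n / (1 - Q))"
      using assms by (auto simp: abs_mult abs_divide intro!: mult_left_mono divide_left_mono)
    then have "norm (norm (euler_coeff Q (Suc n) * z ^ Suc n))
        \<le> (\<bar>euler_coeff Q n\<bar> * (Q ^ n / (1 - Q))) * (norm z ^ n * norm z)"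
      unfolding norm_mult norm_power real_norm_def abs_abs power_Suc2 abs_mult power_abs
      by (rule mult_right_mono) auto
    also have "\<dots> = (norm z * Q ^ n / (1 - Q)) * norm (norm (euler_coeff Q n * z ^ n))"
      by (simp del: euler_coeff.simps add: norm_mult norm_power abs_mult power_abs)
    also have "\<dots> \<le> 1/2 * norm (norm (euler_coeff Q n * z ^ n))"
      using N[OF \<open>n \<ge> N\<close>] by (intro mult_right_mono) auto
    finally show "norm (norm (euler_coeff Q (Suc n) * z ^ Suc n)) \<le> 1/2 * norm (norm (euler_coeff Q n * z ^ n))" .
  qed simp
qed

definition euler_series :: "real \<Rightarrow> real \<Rightarrow> real" where
  "euler_series Q z = (\<Sum>i. euler_coeff Q i * z ^ i)"

lemma euler_series_sums:
  "0 < Q \<Longrightarrow> Q < 1 \<Longrightarrow> (\<lambda>i. euler_coeff Q i * z ^ i) sums euler_series Q z"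
  unfolding euler_series_def
  by (rule summable_sums, rule summable_norm_cancel, rule summable_norm_euler_series)

lemma euler_series_functional_eq:
  assumes "0 < Q" "Q < 1"
  shows "euler_series Q z = (1 - z) * euler_series Q (Q * z)"
proof -
  define w where "w i = euler_coeff Q i * (1 - Q ^ i) * z ^ i" for i
  have "(\<lambda>i. euler_coeff Q i * z ^ i - euler_coeff Q i * (Q * z) ^ i)
      sums (euler_series Q z - euler_series Q (Q * z))"
    by (intro sums_diff euler_series_sums assms)
  then have "w sums (euler_series Q z - euler_series Q (Q * z))"
    unfolding w_def by (simp add: power_mult_distrib algebra_simps)
  then have "(\<lambda>i. w (Suc i)) sums (euler_series Q z - euler_series Q (Q * z))"
    by (subst sums_Suc_iff) (simp add: w_def)
  moreover have "w (Suc i) = - z * (euler_coeff Q i * (Q * z) ^ i)" for i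
    using power_Suc_less_one[OF assms, of i] unfolding w_def
    by (simp add: power_mult_distrib mult_ac)
  ultimately have "(\<lambda>i. - z * (euler_coeff Q i * (Q * z) ^ i))
      sums (euler_series Q z - euler_series Q (Q * z))"
    by simp
  moreover have "(\<lambda>i. - z * (euler_coeff Q i * (Q * z) ^ i)) sums (- z * euler_series Q (Q * z))"
    by (intro sums_mult euler_series_sums assms)
  ultimately have "euler_series Q z - euler_series Q (Q * z) = - z * euler_series Q (Q * z)"
    by (rule sums_unique2)
  then show ?thesis by (simp add: algebra_simps)
qed

lemma euler_series_inverse_power_eq_0:
  assumes "0 < Q" "Q < 1"
  shows "euler_series Q (inverse Q ^ k) = 0"
proof (induction k)
  case 0
  then show ?case using euler_series_functional_eq[OF assms, of 1] by simp
next
  case (Suc k)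
  have "Q * inverse Q ^ Suc k = inverse Q ^ k" using assms by simp
  then have "euler_series Q (inverse Q ^ Suc k) = (1 - inverse Q ^ Suc k) * euler_series Q (inverse Q ^ k)"
    by (subst euler_series_functional_eq[OF assms]) (simp only:)
  then show ?case using Suc by simp
qed

section \<open>Distributions with a q-density\<close>

lemma real_distribution_if_nonneg_distr: "nonneg_distr M \<Longrightarrow> real_distribution M"
  unfolding nonneg_distr_def real_distribution_def real_distribution_axioms_def by auto

lemma (in finite_borel_measure) cdf_scaled_powers_sums:
  assumes "0 < q" "q < 1" "0 < x"
  shows "(\<lambda>n. cdf M (x * q ^ n) - cdf M (x * q ^ Suc n)) sums (cdf M x - cdf M 0)"
proof -
  have "filterlim (\<lambda>n. x * q ^ n) (at_right 0) sequentially"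
    using assms by (intro tendsto_imp_filterlim_at_right) (auto intro!: tendsto_eq_intros LIMSEQ_power_zero)
  with cdf_is_right_cont[of 0] have "(\<lambda>n. cdf M (x * q ^ n)) \<longlonglongrightarrow> cdf M 0"
    unfolding continuous_within by (rule filterlim_compose)
  from telescope_sums'[OF this] show ?thesis by simp
qed

lemma (in real_distribution) cdf_inverse_powers_sums:
  assumes "0 < q" "q < 1"
  shows "(\<lambda>n. cdf M (inverse q ^ Suc n) - cdf M (inverse q ^ n)) sums (1 - cdf M 1)"
proof -
  have "filterlim (\<lambda>n. inverse q ^ n) at_top sequentially"
    unfolding power_inverse using assms by (intro filterlim_inverse_at_top LIMSEQ_power_zero) auto
  with cdf_lim_at_top_prob have "(\<lambda>n. cdf M (inverse q ^ n)) \<longlonglongrightarrow> 1"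
    by (rule filterlim_compose)
  from telescope_sums[OF this] show ?thesis by simp
qed

lemma q_density_cdf_diff:
  assumes "q_density q M f" "0 < q" "q < 1" "0 < x"
  shows "cdf M x - cdf M (q * x) = (1 - q) * x * f x"
proof -
  have "q * x > 0" using assms by simp
  then have summable: "summable (\<lambda>j. f (q * x * q ^ j) * q ^ j)"
    and cdf_x: "cdf M x = x * (1 - q) * (\<Sum>j. f (x * q ^ j) * q ^ j)"
    and cdf_qx: "cdf M (q * x) = q * x * (1 - q) * (\<Sum>j. f (q * x * q ^ j) * q ^ j)"
    using assms unfolding q_density_def jackson_int_def cdf_def2 by auto
  have "(\<Sum>j. f (x * q ^ j) * q ^ j) = f x + (\<Sum>j. f (x * q ^ Suc j) * q ^ Suc j)"
    using assms unfolding q_density_def by (subst suminf_split_head) auto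
  also have "(\<Sum>j. f (x * q ^ Suc j) * q ^ Suc j) = q * (\<Sum>j. f (q * x * q ^ j) * q ^ j)"
    using suminf_mult[OF summable, of q] by (simp add: mult_ac)
  finally show ?thesis unfolding cdf_x cdf_qx by (simp add: algebra_simps)
qed

lemma (in real_distribution) cdf_zero_if_q_density:
  assumes "q_density q M f" "0 < q" "q < 1"
  shows "cdf M 0 = 0"
proof -
  have "cdf M (1 * q ^ n) - cdf M (1 * q ^ Suc n) = (1 - q) * (f (1 * q ^ n) * q ^ n)" for n
    using q_density_cdf_diff[OF assms, of "q ^ n"] assms by (simp add: mult_ac)
  moreover have "(\<lambda>n. cdf M (1 * q ^ n) - cdf M (1 * q ^ Suc n)) sums (cdf M 1 - cdf M 0)"
    using assms by (intro cdf_scaled_powers_sums) auto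
  ultimately have "(\<lambda>n. (1 - q) * (f (1 * q ^ n) * q ^ n)) sums (cdf M 1 - cdf M 0)"
    by simp
  moreover have "(\<lambda>n. (1 - q) * (f (1 * q ^ n) * q ^ n)) sums cdf M 1"
  proof -
    have summable: "summable (\<lambda>n. f (1 * q ^ n) * q ^ n)"
      and cdf_1: "cdf M 1 = 1 * (1 - q) * (\<Sum>n. f (1 * q ^ n) * q ^ n)"
      using assms(1) zero_less_one unfolding q_density_def jackson_int_def cdf_def2 by blast+
    show ?thesis using sums_mult[OF summable_sums[OF summable], of "1 - q"] unfolding cdf_1 by simp
  qed
  ultimately show ?thesis
    using sums_unique2 by fastforce
qed

lemma (in real_distribution) q_density_canonical:
  assumes "cdf M 0 = 0" "0 < q" "q < 1"
  shows "q_density q M (\<lambda>t. (cdf M t - cdf M (q * t)) / (t * (1 - q)))"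
  unfolding q_density_def
proof (intro allI impI)
  fix x :: real assume "x > 0"
  have "(\<lambda>n. (cdf M (x * q ^ n) - cdf M (x * q ^ Suc n)) / (x * (1 - q))) sums (cdf M x / (x * (1 - q)))"
    using cdf_scaled_powers_sums[OF assms(2,3) \<open>x > 0\<close>] assms(1) by (intro sums_divide) simp
  moreover have "(cdf M (x * q ^ n) - cdf M (q * (x * q ^ n))) / (x * q ^ n * (1 - q)) * q ^ n
      = (cdf M (x * q ^ n) - cdf M (x * q ^ Suc n)) / (x * (1 - q))" for n
    using assms by (simp add: mult_ac)
  ultimately show "summable (\<lambda>j. (cdf M (x * q ^ j) - cdf M (q * (x * q ^ j))) / (x * q ^ j * (1 - q)) * q ^ j) \<and>
      measure M {..x} = jackson_int q x (\<lambda>t. (cdf M t - cdf M (q * t)) / (t * (1 - q)))"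
    using assms \<open>x > 0\<close> unfolding jackson_int_def cdf_def2 by (simp add: sums_iff)
qed

definition lattice_mass :: "real \<Rightarrow> real measure \<Rightarrow> int \<Rightarrow> real" where
  "lattice_mass q M j = cdf M (q powi j) - cdf M (q powi (j + 1))"

lemma lattice_mass_q_density:
  assumes "q_density q M f" "0 < q" "q < 1"
  shows "lattice_mass q M j = (1 - q) * q powi j * f (q powi j)"
  using q_density_cdf_diff[OF assms, of "q powi j"] assms
  by (simp add: lattice_mass_def power_int_add_1' mult_ac)

lemma q_moment_term_q_density:
  assumes "q_density q M f" "0 < q" "q < 1"
  shows "q_moment_term q f k j = q powi (j * int k) * lattice_mass q M j / (1 - q)"
proof -
  have "q powi (j * (int k + 1)) = q powi (j * int k) * q powi j"
    using assms by (simp add: distrib_left power_int_add)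
  then show ?thesis
    unfolding q_moment_term_def lattice_mass_q_density[OF assms] using assms by simp
qed

lemma (in finite_borel_measure) lattice_mass_nonneg:
  assumes "0 < q" "q < 1"
  shows "lattice_mass q M j \<ge> 0"
  unfolding lattice_mass_def using assms
  by (auto intro!: cdf_nondecreasing power_int_decreasing)

lemma has_sum_int_if_sums_nonneg:
  fixes u :: "int \<Rightarrow> real"
  assumes "\<And>j. u j \<ge> 0" and "(\<lambda>n. u (int n)) sums s" and "(\<lambda>n. u (- int n - 1)) sums t"
  shows "(u has_sum (s + t)) UNIV"
proof -
  have "inj int" "inj (\<lambda>n::nat. - int n - 1)" by (auto simp: inj_on_def)
  then have "(u has_sum s) (range int)" "(u has_sum t) (range (\<lambda>n::nat. - int n - 1))"
    using has_sum_reindex[of int UNIV u s] has_sum_reindex[of "\<lambda>n::nat. - int n - 1" UNIV u t]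
      sums_nonneg_imp_has_sum[OF assms(2,1)] sums_nonneg_imp_has_sum[OF assms(3,1)]
    by (simp_all add: o_def)
  then have "(u has_sum (s + t)) (range int \<union> range (\<lambda>n::nat. - int n - 1))"
    by (rule has_sum_Un_disjoint) auto
  moreover have "range int \<union> range (\<lambda>n::nat. - int n - 1) = UNIV"
  proof (intro equalityI subsetI)
    fix j :: int
    show "j \<in> range int \<union> range (\<lambda>n::nat. - int n - 1)"
    proof (cases "j \<ge> 0")
      case True
      then have "j = int (nat j)" by simp
      then show ?thesis by blast
    next
      case False
      then have "j = - int (nat (- j - 1)) - 1" by simp
      then show ?thesis by blast
    qed
  qed simp
  ultimately show ?thesis by simp
qed

lemma (in real_distribution) lattice_mass_has_sum:
  assumes "cdf M 0 = 0" "0 < q" "q < 1"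
  shows "(lattice_mass q M has_sum 1) UNIV"
proof -
  have "lattice_mass q M (int n) = cdf M (1 * q ^ n) - cdf M (1 * q ^ Suc n)" for n
    unfolding lattice_mass_def by (metis mult_1 of_nat_Suc power_int_of_nat add.commute)
  moreover have "lattice_mass q M (- int n - 1) = cdf M (inverse q ^ Suc n) - cdf M (inverse q ^ n)" for n
  proof -
    have "- int n - 1 = - int (Suc n)" "- int n - 1 + 1 = - int n" by simp_all
    then show ?thesis
      unfolding lattice_mass_def by (simp only: power_int_minus power_int_of_nat power_inverse)
  qed
  ultimately have "(\<lambda>n. lattice_mass q M (int n)) sums (cdf M 1 - 0)"
    "(\<lambda>n. lattice_mass q M (- int n - 1)) sums (1 - cdf M 1)"
    using cdf_scaled_powers_sums[of q 1] cdf_inverse_powers_sums assms by simp_all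
  from has_sum_int_if_sums_nonneg[OF lattice_mass_nonneg this] assms show ?thesis by simp
qed

section \<open>Perturbing the lattice masses\<close>

lemma nn_integral_count_space_has_sum:
  fixes b :: "'a \<Rightarrow> real"
  assumes "\<And>x. b x \<ge> 0" "(b has_sum s) A"
  shows "(\<integral>\<^sup>+x. ennreal (b x) \<partial>count_space A) = ennreal s"
proof -
  have "b summable_on A" using assms(2) by (rule has_sum_imp_summable)
  then have abs_summable: "Infinite_Set_Sum.abs_summable_on b A"
    using summable_on_iff_abs_summable_on_real abs_summable_equivalent by blast
  then have "(\<integral>\<^sup>+x. ennreal (b x) \<partial>count_space A) = ennreal (infsum b A)"
    using nn_integral_conv_infsetsum[OF abs_summable] infsetsum_infsum[OF abs_summable] assms(1)
    by simp
  then show ?thesis using assms(2) by (simp add: infsumI)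
qed

lemma lattice_distribution_exists:
  fixes b :: "int \<Rightarrow> real"
  assumes b: "\<And>j. b j \<ge> 0" "(b has_sum 1) UNIV" and q: "0 < q" "q < 1"
  obtains N where "nonneg_distr N" "cdf N 0 = 0" "lattice_mass q N = b"
proof
  define P where "P = embed_pmf b"
  have pmf_P: "pmf P j = b j" for j
    unfolding P_def using nn_integral_count_space_has_sum[OF b] b(1) by (simp add: pmf_embed_pmf)
  define N where "N = distr (measure_pmf P) borel (\<lambda>j. q powi j)"
  have cdf_N: "cdf N t = measure (measure_pmf P) {j. q powi j \<le> t}" for t
    unfolding N_def cdf_def2 by (subst measure_distr) (auto simp: vimage_def)
  show "nonneg_distr N"
    unfolding nonneg_distr_def N_def using q
    by (auto intro!: measure_pmf.prob_space_distr simp: AE_distr_iff)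
  have "{j. q powi j \<le> 0} = {}"
    using q by (auto simp: not_le)
  then show "cdf N 0 = 0"
    by (simp add: cdf_N)
  show "lattice_mass q N = b"
  proof
    fix j :: int
    have "{i. q powi i \<le> q powi j} = {j..}" "{i. q powi i \<le> q powi (j + 1)} = {j + 1..}"
      using q power_int_strict_decreasing[of _ _ q] by (force simp: not_less intro: power_int_decreasing)+
    moreover have "measure (measure_pmf P) {j..} - measure (measure_pmf P) {j + 1..}
        = measure (measure_pmf P) {j}"
    proof -
      have "{j..} - {j + 1..} = {j}" by auto
      then show ?thesis using measure_pmf.finite_measure_Diff[of "{j..}" P "{j + 1..}"] by simp
    qed
    ultimately show "lattice_mass q N j = b j"
      unfolding lattice_mass_def cdf_N by (simp add: measure_pmf_single pmf_P)
  qed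
qed

lemma q_moment_indeterminate_if_perturbation:
  assumes q: "0 < q" "q < 1"
    and M: "nonneg_distr M" "q_density q M f" "finite_q_moments q f"
    and c_moments: "\<And>k. ((\<lambda>j. q powi (j * int k) * c j) has_sum 0) UNIV"
    and c_le: "\<And>j. \<bar>c j\<bar> \<le> lattice_mass q M j"
    and "c j\<^sub>0 \<noteq> 0"
  shows "q_moment_indeterminate q M f"
proof -
  interpret real_distribution M using M(1) by (rule real_distribution_if_nonneg_distr)
  have "cdf M 0 = 0" using M(2) q by (rule cdf_zero_if_q_density)
  have "((\<lambda>j. lattice_mass q M j + c j) has_sum (1 + 0)) UNIV"
    using lattice_mass_has_sum[OF \<open>cdf M 0 = 0\<close> q] c_moments[of 0] by (intro has_sum_add) simp_all
  moreover have "lattice_mass q M j + c j \<ge> 0" for j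
    using c_le[of j] by linarith
  ultimately obtain N where N: "nonneg_distr N" "cdf N 0 = 0"
    "lattice_mass q N = (\<lambda>j. lattice_mass q M j + c j)"
    using lattice_distribution_exists[OF _ _ q] by (metis add_0_right)
  interpret N: real_distribution N using N(1) by (rule real_distribution_if_nonneg_distr)
  define g where "g t = (cdf N t - cdf N (q * t)) / (t * (1 - q))" for t
  have g: "q_density q N g"
    unfolding g_def[abs_def] using N(2) q by (rule N.q_density_canonical)
  have "((\<lambda>j. q_moment_term q f k j + q powi (j * int k) * c j / (1 - q))
      has_sum (infsum (q_moment_term q f k) UNIV + 0 / (1 - q))) UNIV" for k
    using M(3) unfolding finite_q_moments_def
    by (intro has_sum_add has_sum_divide_const has_sum_infsum c_moments) blast
  moreover have "q_moment_term q g k = (\<lambda>j. q_moment_term q f k j + q powi (j * int k) * c j / (1 - q))" for k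
    by (intro ext) (simp add: q_moment_term_q_density[OF g q] q_moment_term_q_density[OF M(2) q] N(3)
        add_divide_distrib distrib_left)
  ultimately have "(q_moment_term q g k has_sum infsum (q_moment_term q f k) UNIV) UNIV" for k
    by simp
  then have "finite_q_moments q g" "\<And>k. q_moment q g k = q_moment q f k"
    unfolding finite_q_moments_def q_moment_def by (auto dest: has_sum_imp_summable infsumI)
  moreover have "\<not> q_equiv q f g"
  proof
    assume "q_equiv q f g"
    then have "lattice_mass q M j\<^sub>0 = lattice_mass q N j\<^sub>0"
      unfolding q_equiv_def lattice_mass_q_density[OF M(2) q] lattice_mass_q_density[OF g q] by simp
    with N(3) \<open>c j\<^sub>0 \<noteq> 0\<close> show False by simp
  qed
  ultimately show ?thesis
    unfolding q_moment_indeterminate_def q_moment_determinate_def using N(1) g by blast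
qed

definition euler_lattice_coeff :: "real \<Rightarrow> nat \<Rightarrow> int \<Rightarrow> real" where
  "euler_lattice_coeff q m j = (if j \<le> 0 \<and> int m dvd j then euler_coeff (q ^ m) (nat (- j) div m) else 0)"

lemma euler_lattice_coeff_at:
  "m \<ge> 1 \<Longrightarrow> euler_lattice_coeff q m (- int (m * i)) = euler_coeff (q ^ m) i"
  unfolding euler_lattice_coeff_def by (simp del: of_nat_mult add: nat_mult_distrib)

lemma euler_lattice_coeff_eq_0:
  assumes "j \<notin> range (\<lambda>i. - int (m * i))"
  shows "euler_lattice_coeff q m j = 0"
proof (rule ccontr)
  assume "euler_lattice_coeff q m j \<noteq> 0"
  then have "j \<le> 0" "int m dvd j"
    unfolding euler_lattice_coeff_def by (auto split: if_splits)
  then obtain l where "j \<le> 0" "j = int m * l"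
    by (auto elim: dvdE)
  then have "j = - int (m * nat (- l))"
    by (cases "m = 0") (auto simp: mult_le_0_iff)
  with assms show False by blast
qed

lemma euler_lattice_coeff_moments:
  assumes "0 < q" "q < 1" "m \<ge> 1"
  shows "((\<lambda>j. q powi (j * int k) * euler_lattice_coeff q m j) has_sum 0) UNIV"
proof -
  define Q where "Q = q ^ m"
  have Q: "0 < Q" "Q < 1"
    using assms by (simp_all add: Q_def power_less_one_iff)
  have "(\<lambda>i. euler_coeff Q i * (inverse Q ^ k) ^ i) sums 0"
    using euler_series_sums[OF Q] euler_series_inverse_power_eq_0[OF Q] by metis
  then have "((\<lambda>i. euler_coeff Q i * (inverse Q ^ k) ^ i) has_sum 0) UNIV"
    by (rule norm_summable_imp_has_sum[OF summable_norm_euler_series[OF Q]])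
  moreover have "(\<lambda>j. q powi (j * int k) * euler_lattice_coeff q m j) \<circ> (\<lambda>i. - int (m * i))
      = (\<lambda>i. euler_coeff Q i * (inverse Q ^ k) ^ i)"
  proof
    fix i
    have "q powi (- int (m * i) * int k) = inverse (q ^ (m * i * k))"
      by (simp add: power_int_minus flip: power_int_of_nat)
    then show "((\<lambda>j. q powi (j * int k) * euler_lattice_coeff q m j) \<circ> (\<lambda>i. - int (m * i))) i
        = euler_coeff Q i * (inverse Q ^ k) ^ i"
      unfolding o_def euler_lattice_coeff_at[OF assms(3)] by (simp add: Q_def power_inverse mult_ac flip: power_mult)
  qed
  moreover have "inj (\<lambda>i. - int (m * i))"
    using assms(3) by (auto simp: inj_on_def)
  ultimately have "((\<lambda>j. q powi (j * int k) * euler_lattice_coeff q m j) has_sum 0) (range (\<lambda>i. - int (m * i)))"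
    by (simp only: has_sum_reindex)
  moreover have "((\<lambda>j. q powi (j * int k) * euler_lattice_coeff q m j) has_sum 0) (range (\<lambda>i. - int (m * i)))
      \<longleftrightarrow> ((\<lambda>j. q powi (j * int k) * euler_lattice_coeff q m j) has_sum 0) UNIV"
  proof (rule has_sum_cong_neutral)
    fix j assume "j \<in> UNIV - range (\<lambda>i. - int (m * i))"
    then have "euler_lattice_coeff q m j = 0" by (intro euler_lattice_coeff_eq_0) blast
    then show "q powi (j * int k) * euler_lattice_coeff q m j = 0" by simp
  qed auto
  ultimately show ?thesis by blast
qed

lemma lattice_mass_lower_bound:
  assumes "q_density q M f" "0 < q" "q < 1"
    and "f (q powi (- int (m * i))) \<ge> C * q powr (real (m * i * (i + 1)) / 2)"
  shows "lattice_mass q M (- int (m * i)) \<ge> (1 - q) * C * (q ^ m) powr (real i * (real i - 1) / 2)"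
proof -
  have "real m * (real i * (real i - 1) / 2) = - real (m * i) + real (m * i * (i + 1)) / 2"
    by (simp add: field_simps)
  then have "(q ^ m) powr (real i * (real i - 1) / 2) = q powr (- real (m * i)) * q powr (real (m * i * (i + 1)) / 2)"
    using assms(2) by (simp add: powr_realpow[symmetric] powr_powr flip: powr_add)
  also have "q powr (- real (m * i)) = q powi (- int (m * i))"
    using assms(2) by (simp only: power_int_minus power_int_of_nat powr_minus powr_realpow)
  finally have "(1 - q) * C * (q ^ m) powr (real i * (real i - 1) / 2)
      = (1 - q) * q powi (- int (m * i)) * (C * q powr (real (m * i * (i + 1)) / 2))"
    by (simp add: mult_ac)
  also have "\<dots> \<le> (1 - q) * q powi (- int (m * i)) * f (q powi (- int (m * i)))"
    using assms(2,3,4) by (intro mult_left_mono) auto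
  also have "\<dots> = lattice_mass q M (- int (m * i))"
    using lattice_mass_q_density[OF assms(1-3)] by simp
  finally show ?thesis .
qed

lemma (in finite_borel_measure) euler_lattice_coeff_dominated:
  assumes q: "0 < q" "q < 1" and "m \<ge> 1" "C > 0" "q_density q M f"
    and f_ge: "\<And>i. f (q powi (- int (m * i))) \<ge> C * q powr (real (m * i * (i + 1)) / 2)"
  shows "(1 - q) * C / exp (1 / (1 - q ^ m)^2) * \<bar>euler_lattice_coeff q m j\<bar> \<le> lattice_mass q M j"
proof (cases "j \<in> range (\<lambda>i. - int (m * i))")
  case True
  then obtain i where j: "j = - int (m * i)" by blast
  define Q where "Q = q ^ m"
  define K where "K = exp (1 / (1 - Q)^2)"
  have "0 < Q" "Q < 1"
    using assms(1-3) by (simp_all add: Q_def power_less_one_iff)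
  then have "(1 - q) * C / K * \<bar>euler_coeff Q i\<bar> \<le> (1 - q) * C / K * (K * Q powr (real i * (real i - 1) / 2))"
    unfolding K_def using q \<open>C > 0\<close> by (intro mult_left_mono abs_euler_coeff_le) auto
  also have "\<dots> = (1 - q) * C * Q powr (real i * (real i - 1) / 2)"
    by (simp add: K_def)
  also have "\<dots> \<le> lattice_mass q M j"
    unfolding j Q_def using assms(5) q f_ge by (rule lattice_mass_lower_bound)
  finally show ?thesis
    unfolding j euler_lattice_coeff_at[OF assms(3)] K_def Q_def .
next
  case False
  then show ?thesis
    using euler_lattice_coeff_eq_0[OF False] lattice_mass_nonneg[OF q] by simp
qed

theorem theorem3:
  fixes q C :: real and M :: "real measure" and f :: "real \<Rightarrow> real" and m :: nat
  assumes "0 < q" and "q < 1"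
    and "nonneg_distr M"
    and "q_density q M f"
    and "finite_q_moments q f"
    and "m \<ge> 1"
    and "C > 0"
    and "\<And>j::nat. f (q powi (- int (m * j))) \<ge> C * q powr (real (m * j * (j + 1)) / 2)"
  shows "q_moment_indeterminate q M f"
proof -
  interpret real_distribution M using assms(3) by (rule real_distribution_if_nonneg_distr)
  define \<epsilon> where "\<epsilon> = (1 - q) * C / exp (1 / (1 - q ^ m)^2)"
  have "\<epsilon> > 0" using assms(2,7) by (simp add: \<epsilon>_def)
  show ?thesis
  proof (rule q_moment_indeterminate_if_perturbation[OF assms(1-5)])
    show "((\<lambda>j. q powi (j * int k) * (\<epsilon> * euler_lattice_coeff q m j)) has_sum 0) UNIV" for k
      using has_sum_cmult_right[OF euler_lattice_coeff_moments[OF assms(1,2,6)], of \<epsilon>]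
      by (simp add: mult_ac)
    show "\<bar>\<epsilon> * euler_lattice_coeff q m j\<bar> \<le> lattice_mass q M j" for j
      using euler_lattice_coeff_dominated[OF assms(1,2,6,7,4,8), folded \<epsilon>_def] \<open>\<epsilon> > 0\<close>
      by (simp add: abs_mult)
    have "euler_lattice_coeff q m 0 = 1"
      using euler_lattice_coeff_at[OF assms(6), of q 0] by simp
    then show "\<epsilon> * euler_lattice_coeff q m 0 \<noteq> 0"
      using \<open>\<epsilon> > 0\<close> by simp
  qed
qed

end
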